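(* Consider the problem and the UCGS iterates described in the context, and suppose the parameters satisfy $\beta_k\ge L_k\gamma_k$ for all $k$. Then for every $k\ge1$ and every $x\in X$, $$f(y_k)-\ell_k(x)\le\frac{\varepsilon}{2}+\Gamma_k\sum_{i=1}^k\frac{\gamma_i\beta_i}{2\Gamma_i}\big(\|x-x_{i-1}\|^2-\|x-x_i\|^2\big)+\Gamma_k\sum_{i=1}^k\frac{\gamma_i\eta_i}{\Gamma_i},$$ where $\ell_k(x):=\Gamma_k\sum_{i=1}^k\frac{\gamma_i}{\Gamma_i}\big(f(z_i)+\langle\nabla f(z_i),x-z_i\rangle\big)$.
   Context: Problem: $\min_{x\in X}f(x)$, where $X\subset\mathbb{R}^n$ is nonempty, compact, convex (Euclidean norm), and $f$ is convex and differentiable. ACGM procedure with input $(g,u,\beta,\eta)$, $u\in X$: with $\phi(x)=\langle g,x\rangle+\frac\beta2\|x-u\|^2$, set $u^0=u$; for $t=1,2,\dots$ compute $v^t\in X$ with $\langle\nabla\phi(u^{t-1}),v^t-x\rangle\le\delta^t$ for all $x\in X$; if $\langle\nabla\phi(u^{t-1}),u^{t-1}-v^t\rangle\le\eta-\delta^t$ output $u^{t-1}$, else $u^t=(1-\alpha^t)u^{t-1}+\alpha^tv^t$, $\alpha^t\in[0,1]$. UCGS iterates with accuracy $\varepsilon>0$, start $x_0\in X$, $y_0:=x_0$, positive parameters $\beta_k,\eta_k$: at outer iteration $k=1,2,\dots$, with the accepted value $L_k>0$, $\gamma_1=1$ and, for $k\ge2$, $\gamma_k\in(0,1]$ solves $L_k\gamma_k^2/k=\Gamma_{k-1}(1-\gamma_k)$;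 $\Gamma_k:=L_k\gamma_k^2/k$ (so $\Gamma_k=(1-\gamma_k)\Gamma_{k-1}$ for $k\ge2$); $z_k=(1-\gamma_k)y_{k-1}+\gamma_kx_{k-1}$; $x_k:=$ output of ACGM with $g=\nabla f(z_k)$, $u=x_{k-1}$, $\beta=\beta_k$, $\eta=\eta_k$; $y_k=(1-\gamma_k)y_{k-1}+\gamma_kx_k$; and $L_k$ is such that $f(y_k)\le f(z_k)+\langle\nabla f(z_k),y_k-z_k\rangle+\frac{L_k}{2}\|y_k-z_k\|^2+\frac{\varepsilon}{2}\gamma_k$. *)

theory Defs
  imports "HOL-Analysis.Analysis"
begin

text \<open>Gradient of phi(x) = <g,x> + beta/2 ||x-u||^2.\<close>
definition acgm_grad :: "'a::euclidean_space \<Rightarrow> 'a \<Rightarrow> real \<Rightarrow> 'a \<Rightarrow> 'a" where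
  "acgm_grad g u \<beta> y = g + \<beta> *\<^sub>R (y - u)"

text \<open>w is a possible output of the ACGM procedure with input (g,u,beta,eta):
  there is a run u^0 = u, u^1, ..., with LMO points v^t, tolerances delta^t and step sizes
  alpha^t, which stops at iteration T (T \<ge> 1) and outputs w = u^(T-1).\<close>
definition acgm_output ::
  "'a::euclidean_space set \<Rightarrow> 'a \<Rightarrow> 'a \<Rightarrow> real \<Rightarrow> real \<Rightarrow> 'a \<Rightarrow> bool" where
  "acgm_output X g u \<beta> \<eta> w \<longleftrightarrow>
     (\<exists>(us :: nat \<Rightarrow> 'a) (vs :: nat \<Rightarrow> 'a) (\<delta> :: nat \<Rightarrow> real) (\<alpha> :: nat \<Rightarrow> real) (T :: nat).
        T \<ge> 1 \<and> us 0 = u \<and>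
        (\<forall>t\<in>{1..T}. vs t \<in> X \<and>
           (\<forall>x\<in>X. inner (acgm_grad g u \<beta> (us (t - 1))) (vs t - x) \<le> \<delta> t)) \<and>
        (\<forall>t\<in>{1..<T}.
           inner (acgm_grad g u \<beta> (us (t - 1))) (us (t - 1) - vs t) > \<eta> - \<delta> t \<and>
           0 \<le> \<alpha> t \<and> \<alpha> t \<le> 1 \<and>
           us t = (1 - \<alpha> t) *\<^sub>R us (t - 1) + \<alpha> t *\<^sub>R vs t) \<and>
        inner (acgm_grad g u \<beta> (us (T - 1))) (us (T - 1) - vs T) \<le> \<eta> - \<delta> T \<and>
        w = us (T - 1))"

end

theory Submission
  imports Defs
begin

text \<open>Put T_i(u) = f(z_i) + <\<nabla>f(z_i), u - z_i> + eta_i + beta_i/2 (|u - x_{i-1}|^2 - |u - x_i|^2).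
  In each outer step, the accepted upper bound with constant L_k, the gradient inequality at z_k
  applied to y_{k-1}, and the eta_k-optimality of x_k for the prox subproblem combine, by the
  three-point identity and beta_k \<ge> L_k gamma_k, into the recursion
  f(y_k) \<le> (1 - gamma_k) f(y_{k-1}) + gamma_k T_k(u) + gamma_k eps/2.
  Since Gamma_k = (1 - gamma_k) Gamma_{k-1} and gamma_1 = 1, dividing by Gamma_k telescopes it into
  f(y_k) \<le> Gamma_k \<Sum>_i gamma_i/Gamma_i T_i(u) + eps/2.\<close>

lemma convex_on_has_derivative_above_tangent:
  fixes f :: "'a::real_normed_vector \<Rightarrow> real"
  assumes fconv: "convex_on UNIV f"
    and fderiv: "(f has_derivative D) (at z)"
  shows "f z + D (y - z) \<le> f y"
proof -
  define h where "h t = f (z + t *\<^sub>R (y - z))" for t :: real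
  have "convex_on UNIV h"
  proof (rule convex_onI)
    fix t a b :: real assume t: "0 < t" "t < 1"
    have "h ((1 - t) *\<^sub>R a + t *\<^sub>R b)
        = f ((1 - t) *\<^sub>R (z + a *\<^sub>R (y - z)) + t *\<^sub>R (z + b *\<^sub>R (y - z)))"
      unfolding h_def by (rule arg_cong[where f = f]) (simp add: algebra_simps)
    also have "\<dots> \<le> (1 - t) * h a + t * h b"
      unfolding h_def using convex_onD[OF fconv, of t] t by auto
    finally show "h ((1 - t) *\<^sub>R a + t *\<^sub>R b) \<le> (1 - t) * h a + t * h b" .
  qed simp
  moreover have "(h has_field_derivative D (y - z)) (at 0)"
  proof -
    have line: "((\<lambda>t. z + t *\<^sub>R (y - z)) has_derivative (\<lambda>t. t *\<^sub>R (y - z))) (at 0)"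
      by (auto intro!: derivative_eq_intros)
    have "(h has_derivative (\<lambda>t. D (t *\<^sub>R (y - z)))) (at 0)"
      unfolding h_def using has_derivative_compose[OF line] fderiv by (simp add: o_def)
    moreover have "D (t *\<^sub>R (y - z)) = D (y - z) * t" for t
      using linear_cmul[OF has_derivative_linear[OF fderiv]] by simp
    ultimately show ?thesis
      unfolding has_field_derivative_def by simp
  qed
  ultimately have "D (y - z) * (1 - 0) \<le> h 1 - h 0"
    by (intro convex_on_imp_above_tangent) auto
  then show ?thesis
    unfolding h_def by simp
qed

lemma acgm_output_approx_solution:
  assumes out: "acgm_output X g u \<beta> \<eta> w" and u: "u \<in> X" and cX: "convex X"
  shows "w \<in> X" and "\<forall>x\<in>X. inner (acgm_grad g u \<beta> w) (w - x) \<le> \<eta>"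
proof -
  obtain us vs \<delta> \<alpha> T where T: "T \<ge> (1::nat)" "us 0 = u"
    and v: "\<forall>t\<in>{1..T}. vs t \<in> X \<and>
           (\<forall>x\<in>X. inner (acgm_grad g u \<beta> (us (t - 1))) (vs t - x) \<le> \<delta> t)"
    and iter: "\<forall>t\<in>{1..<T}.
           inner (acgm_grad g u \<beta> (us (t - 1))) (us (t - 1) - vs t) > \<eta> - \<delta> t \<and>
           0 \<le> \<alpha> t \<and> \<alpha> t \<le> 1 \<and>
           us t = (1 - \<alpha> t) *\<^sub>R us (t - 1) + \<alpha> t *\<^sub>R vs t"
    and stop: "inner (acgm_grad g u \<beta> (us (T - 1))) (us (T - 1) - vs T) \<le> \<eta> - \<delta> T"
    and w: "w = us (T - 1)"
    using out unfolding acgm_output_def by blast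
  have "us t \<in> X" if "t < T" for t
    using that
  proof (induction t)
    case 0
    then show ?case using T u by simp
  next
    case (Suc t)
    then have "us (Suc t) = (1 - \<alpha> (Suc t)) *\<^sub>R us t + \<alpha> (Suc t) *\<^sub>R vs (Suc t)"
      "0 \<le> \<alpha> (Suc t)" "\<alpha> (Suc t) \<le> 1" "vs (Suc t) \<in> X"
      using iter v by auto
    then show ?case
      using Suc convexD_alt[OF cX] by (metis Suc_lessD)
  qed
  then show "w \<in> X"
    using w T by simp
  have "\<forall>x\<in>X. inner (acgm_grad g u \<beta> w) (vs T - x) \<le> \<delta> T"
    using v w T by auto
  then show "\<forall>x\<in>X. inner (acgm_grad g u \<beta> w) (w - x) \<le> \<eta>"
    using stop w by (smt (verit) inner_diff_right)
qed

lemma inner_diff_three_point: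
  fixes a b c :: "'a::real_inner"
  shows "2 * inner (a - b) (a - c) = (norm (a - b))\<^sup>2 + (norm (c - a))\<^sup>2 - (norm (c - b))\<^sup>2"
  by (simp add: power2_norm_eq_inner inner_diff_left inner_diff_right inner_commute algebra_simps)

lemma ucgs_step_bound:
  fixes f :: "'a::real_inner \<Rightarrow> real"
  assumes fconv: "convex_on UNIV f"
    and fgrad: "(f has_derivative (\<lambda>h. inner g h)) (at z)"
    and \<gamma>: "0 \<le> \<gamma>" "\<gamma> \<le> 1" and \<beta>L: "L * \<gamma> \<le> \<beta>"
    and z: "z = (1 - \<gamma>) *\<^sub>R y' + \<gamma> *\<^sub>R x'"
    and y: "y = (1 - \<gamma>) *\<^sub>R y' + \<gamma> *\<^sub>R x"
    and approx_opt: "inner (g + \<beta> *\<^sub>R (x - x')) (x - u) \<le> \<eta>"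
    and upper: "f y \<le> f z + inner g (y - z) + L / 2 * (norm (y - z))\<^sup>2 + e"
  shows "f y \<le> (1 - \<gamma>) * f y'
           + \<gamma> * (f z + inner g (u - z) + \<eta> + \<beta> / 2 * ((norm (u - x'))\<^sup>2 - (norm (u - x))\<^sup>2)) + e"
proof -
  define N where "N = (norm (x - x'))\<^sup>2"
  define D where "D = (norm (u - x'))\<^sup>2 - (norm (u - x))\<^sup>2"
  have split: "y - z = (1 - \<gamma>) *\<^sub>R (y' - z) + \<gamma> *\<^sub>R ((x - u) + (u - z))"
    unfolding y by (simp add: algebra_simps)
  have lin: "inner g (y - z)
      = (1 - \<gamma>) * inner g (y' - z) + \<gamma> * inner g (x - u) + \<gamma> * inner g (u - z)"
    unfolding split by (simp only: inner_add_right inner_scaleR_right) (simp add: algebra_simps)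
  have "f z + inner g (y' - z) \<le> f y'"
    using convex_on_has_derivative_above_tangent[OF fconv fgrad] .
  then have tangent: "(1 - \<gamma>) * inner g (y' - z) \<le> (1 - \<gamma>) * (f y' - f z)"
    using \<gamma> by (intro mult_left_mono) auto
  have three_point: "inner (x - x') (x - u) = (N - D) / 2"
    unfolding N_def D_def using inner_diff_three_point[of x x' u] by simp
  have "inner g (x - u) + \<beta> * ((N - D) / 2) \<le> \<eta>"
    using approx_opt unfolding inner_add_left inner_scaleR_left three_point .
  then have "inner g (x - u) \<le> \<eta> + \<beta> / 2 * (D - N)"
    by (simp add: field_simps)
  then have prox: "\<gamma> * inner g (x - u) \<le> \<gamma> * (\<eta> + \<beta> / 2 * (D - N))"
    using \<gamma> by (intro mult_left_mono) auto
  have "y - z = \<gamma> *\<^sub>R (x - x')"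
    unfolding y z by (simp add: algebra_simps)
  then have "L / 2 * (norm (y - z))\<^sup>2 = (L * \<gamma>) * (\<gamma> * N) / 2"
    unfolding N_def by (simp add: power_mult_distrib power2_eq_square)
  also have "\<dots> \<le> \<beta> * (\<gamma> * N) / 2"
    using \<beta>L \<gamma> unfolding N_def by (intro divide_right_mono mult_right_mono) auto
  finally have quad: "L / 2 * (norm (y - z))\<^sup>2 \<le> \<beta> * (\<gamma> * N) / 2" .
  have "f y \<le> f z + (1 - \<gamma>) * (f y' - f z) + \<gamma> * (\<eta> + \<beta> / 2 * (D - N))
      + \<gamma> * inner g (u - z) + \<beta> * (\<gamma> * N) / 2 + e"
    using upper lin tangent prox quad by linarith
  then show ?thesis
    unfolding D_def by (simp add: algebra_simps)
qed

lemma weighted_recursion_unroll: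
  fixes F T \<gamma> \<Gamma> :: "nat \<Rightarrow> real"
  assumes \<gamma>1: "\<gamma> 1 = 1"
    and \<Gamma>pos: "\<And>k. k \<ge> 1 \<Longrightarrow> \<Gamma> k > 0"
    and \<gamma>le: "\<And>k. k \<ge> 2 \<Longrightarrow> \<gamma> k \<le> 1"
    and \<Gamma>rec: "\<And>k. k \<ge> 2 \<Longrightarrow> \<Gamma> k = (1 - \<gamma> k) * \<Gamma> (k - 1)"
    and step: "\<And>k. k \<ge> 1 \<Longrightarrow> F k \<le> (1 - \<gamma> k) * F (k - 1) + \<gamma> k * T k + c * \<gamma> k"
    and k: "k \<ge> 1"
  shows "F k \<le> \<Gamma> k * (\<Sum>i=1..k. \<gamma> i / \<Gamma> i * T i) + c"
  using k
proof (induction k rule: nat_induct_at_least)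
  case base
  then show ?case
    using step[of 1] \<gamma>1 \<Gamma>pos[of 1] by simp
next
  case (Suc n)
  define S where "S = (\<Sum>i=1..n. \<gamma> i / \<Gamma> i * T i)"
  let ?g = "\<gamma> (Suc n)"
  have \<Gamma>suc: "\<Gamma> (Suc n) = (1 - ?g) * \<Gamma> n"
    using \<Gamma>rec[of "Suc n"] Suc.hyps by simp
  have "F (Suc n) \<le> (1 - ?g) * F n + ?g * T (Suc n) + c * ?g"
    using step[of "Suc n"] by simp
  also have "\<dots> \<le> (1 - ?g) * (\<Gamma> n * S + c) + ?g * T (Suc n) + c * ?g"
    using Suc.IH \<gamma>le[of "Suc n"] Suc.hyps unfolding S_def
    by (intro add_right_mono mult_left_mono) auto
  also have "\<dots> = \<Gamma> (Suc n) * S + ?g * T (Suc n) + c"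
    unfolding \<Gamma>suc by (simp add: algebra_simps)
  also have "\<dots> = \<Gamma> (Suc n) * (S + ?g / \<Gamma> (Suc n) * T (Suc n)) + c"
    using \<Gamma>pos[of "Suc n"] by (simp add: distrib_left)
  finally show ?case
    unfolding S_def by simp
qed

theorem mainTheorem4:
  fixes X :: "'a::euclidean_space set"
    and f :: "'a \<Rightarrow> real" and gradf :: "'a \<Rightarrow> 'a"
    and \<epsilon> :: real
    and x y z :: "nat \<Rightarrow> 'a"
    and L \<gamma> \<Gamma> \<beta> \<eta> :: "nat \<Rightarrow> real"
  assumes X: "X \<noteq> {}" "compact X" "convex X"
    and fconv: "convex_on UNIV f"
    and fgrad: "\<And>w. (f has_derivative (\<lambda>h. inner (gradf w) h)) (at w)"
    and eps: "\<epsilon> > 0"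
    and x0: "x 0 \<in> X" and y0: "y 0 = x 0"
    and Lpos: "\<And>k. k \<ge> 1 \<Longrightarrow> L k > 0"
    and \<beta>pos: "\<And>k. k \<ge> 1 \<Longrightarrow> \<beta> k > 0"
    and \<eta>pos: "\<And>k. k \<ge> 1 \<Longrightarrow> \<eta> k > 0"
    and \<gamma>1: "\<gamma> 1 = 1"
    and \<gamma>k: "\<And>k. k \<ge> 2 \<Longrightarrow> 0 < \<gamma> k \<and> \<gamma> k \<le> 1 \<and>
                L k * (\<gamma> k)\<^sup>2 / real k = \<Gamma> (k - 1) * (1 - \<gamma> k)"
    and \<Gamma>def: "\<And>k. k \<ge> 1 \<Longrightarrow> \<Gamma> k = L k * (\<gamma> k)\<^sup>2 / real k"
    and zdef: "\<And>k. k \<ge> 1 \<Longrightarrow> z k = (1 - \<gamma> k) *\<^sub>R y (k - 1) + \<gamma> k *\<^sub>R x (k - 1)"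
    and xdef: "\<And>k. k \<ge> 1 \<Longrightarrow> acgm_output X (gradf (z k)) (x (k - 1)) (\<beta> k) (\<eta> k) (x k)"
    and ydef: "\<And>k. k \<ge> 1 \<Longrightarrow> y k = (1 - \<gamma> k) *\<^sub>R y (k - 1) + \<gamma> k *\<^sub>R x k"
    and Lacc: "\<And>k. k \<ge> 1 \<Longrightarrow> f (y k) \<le> f (z k) + inner (gradf (z k)) (y k - z k)
                 + L k / 2 * (norm (y k - z k))\<^sup>2 + \<epsilon> / 2 * \<gamma> k"
    and \<beta>L: "\<And>k. k \<ge> 1 \<Longrightarrow> \<beta> k \<ge> L k * \<gamma> k"
  shows "\<forall>k\<ge>1. \<forall>u\<in>X.
     f (y k) - \<Gamma> k * (\<Sum>i=1..k. \<gamma> i / \<Gamma> i * (f (z i) + inner (gradf (z i)) (u - z i)))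
     \<le> \<epsilon> / 2
        + \<Gamma> k * (\<Sum>i=1..k. \<gamma> i * \<beta> i / (2 * \<Gamma> i) * ((norm (u - x (i - 1)))\<^sup>2 - (norm (u - x i))\<^sup>2))
        + \<Gamma> k * (\<Sum>i=1..k. \<gamma> i * \<eta> i / \<Gamma> i)"
proof (intro allI impI ballI)
  fix k :: nat and u assume k: "k \<ge> 1" and u: "u \<in> X"
  have \<gamma>: "0 < \<gamma> i" "\<gamma> i \<le> 1" if "i \<ge> 1" for i
    using \<gamma>1 \<gamma>k[of i] that by (cases "i = 1"; simp)+
  have \<Gamma>pos: "\<Gamma> i > 0" if "i \<ge> 1" for i
    using \<Gamma>def[OF that] Lpos[OF that] \<gamma>[OF that] that by simp
  have \<Gamma>rec: "\<Gamma> i = (1 - \<gamma> i) * \<Gamma> (i - 1)" if "i \<ge> 2" for i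
    using \<Gamma>def[of i] \<gamma>k[OF that] that by simp
  have xX: "x i \<in> X" for i
    by (induction i) (use x0 acgm_output_approx_solution(1)[OF xdef _ X(3)] in auto)
  define T where "T i = f (z i) + inner (gradf (z i)) (u - z i) + \<eta> i
    + \<beta> i / 2 * ((norm (u - x (i - 1)))\<^sup>2 - (norm (u - x i))\<^sup>2)" for i
  have "f (y i) \<le> (1 - \<gamma> i) * f (y (i - 1)) + \<gamma> i * T i + \<epsilon> / 2 * \<gamma> i" if i: "i \<ge> 1" for i
  proof -
    have "inner (acgm_grad (gradf (z i)) (x (i - 1)) (\<beta> i) (x i)) (x i - u) \<le> \<eta> i"
      using acgm_output_approx_solution(2)[OF xdef[OF i] xX X(3)] u by blast
    then show ?thesis
      unfolding T_def acgm_grad_def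
      by (rule ucgs_step_bound[OF fconv fgrad less_imp_le[OF \<gamma>(1)[OF i]] \<gamma>(2)[OF i]
            \<beta>L[OF i] zdef[OF i] ydef[OF i] _ Lacc[OF i]])
  qed
  moreover have "\<gamma> i \<le> 1" if "i \<ge> 2" for i
    using \<gamma>(2) that by simp
  ultimately have "f (y k) \<le> \<Gamma> k * (\<Sum>i=1..k. \<gamma> i / \<Gamma> i * T i) + \<epsilon> / 2"
    using weighted_recursion_unroll[where F = "\<lambda>i. f (y i)", OF \<gamma>1 \<Gamma>pos _ \<Gamma>rec _ k] by blast
  moreover have "(\<Sum>i=1..k. \<gamma> i / \<Gamma> i * T i)
      = (\<Sum>i=1..k. \<gamma> i / \<Gamma> i * (f (z i) + inner (gradf (z i)) (u - z i)))
        + (\<Sum>i=1..k. \<gamma> i * \<beta> i / (2 * \<Gamma> i) * ((norm (u - x (i - 1)))\<^sup>2 - (norm (u - x i))\<^sup>2))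
        + (\<Sum>i=1..k. \<gamma> i * \<eta> i / \<Gamma> i)"
    unfolding sum.distrib[symmetric] T_def by (rule sum.cong) (simp_all add: algebra_simps)
  ultimately show "f (y k) - \<Gamma> k * (\<Sum>i=1..k. \<gamma> i / \<Gamma> i * (f (z i) + inner (gradf (z i)) (u - z i)))
     \<le> \<epsilon> / 2
        + \<Gamma> k * (\<Sum>i=1..k. \<gamma> i * \<beta> i / (2 * \<Gamma> i) * ((norm (u - x (i - 1)))\<^sup>2 - (norm (u - x i))\<^sup>2))
        + \<Gamma> k * (\<Sum>i=1..k. \<gamma> i * \<eta> i / \<Gamma> i)"
    by (simp add: distrib_left)
qed

end
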